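(* Let $n\ge 4$, and let $\mathcal L_1,\mathcal L_2$ be the complex Leibniz algebras with basis $\{h_1,h_2,e_1,\dots,e_n\}$ where $\mathcal L_1$ has nonzero products $[e_1,e_1]=e_3$, $[e_i,e_1]=e_{i+1}$ ($3\le i\le n-1$), $[e_1,h_2]=e_1$, $[h_2,e_1]=-e_1$, $[e_2,h_1]=e_2$, $[h_1,e_2]=-e_2$, $[e_i,h_2]=(i-1)e_i$ ($3\le i\le n$), and $\mathcal L_2$ has the same products except $[h_1,e_2]=0$. Put $e_{n+1}=0$. (1) $(d,D)$ is a biderivation of $\mathcal L_1$ iff there are $\alpha_1,\dots,\alpha_4,\beta_4,\dots,\beta_{n+1}\in\mathbb C$ with $d(h_1)=-\alpha_2e_2$, $d(h_2)=-\alpha_1e_1$, $d(e_1)=\alpha_4e_1+\alpha_1e_3$, $d(e_2)=\alpha_3e_2$, $d(e_i)=(i-1)\alpha_4e_i+\alpha_1e_{i+1}$ ($3\le i\le n$), and $D(h_1)=-\alpha_2e_2$, $D(h_2)=-\alpha_1e_1+\sum_{i=3}^{n-1}(i-1)\beta_{i+1}e_i+\beta_{n+1}e_n$, $D(e_1)=\alpha_4e_1-\alpha_1e_3+\sum_{i=4}^n\beta_ie_i$, $D(e_2)=\alpha_3e_2$, $D(e_i)=0$ ($3\le i\le n$). (2) $(d,D)$ is a biderivation of $\mathcal L_2$ iff there are $\alpha_1,\alpha_2,\alpha_3,\beta_4,\dots,\beta_{n+2}\in\mathbb C$ with $d(h_1)=0$, $d(h_2)=-\alpha_1e_1$, $d(e_1)=\alpha_3e_1+\alpha_1e_3$,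 $d(e_2)=\alpha_2e_2$, $d(e_i)=(i-1)\alpha_3e_i+\alpha_1e_{i+1}$ ($3\le i\le n$), and $D(h_1)=\beta_{n+2}e_2$, $D(h_2)=-\alpha_1e_1+\sum_{i=3}^{n-1}(i-1)\beta_{i+1}e_i+\beta_{n+1}e_n$, $D(e_1)=\alpha_3e_1-\alpha_1e_3+\sum_{i=4}^n\beta_ie_i$, $D(e_i)=0$ ($2\le i\le n$).
   Context: Leibniz algebras are right Leibniz over $\mathbb C$: $[x,[y,z]]=[[x,y],z]-[[x,z],y]$. Unlisted products are zero. A derivation is a linear $d$ with $d([x,y])=[d(x),y]+[x,d(y)]$; an anti-derivation is a linear $D$ with $D([x,y])=[D(x),y]-[D(y),x]$; a biderivation is a pair $(d,D)$ of a derivation and an anti-derivation with $[x,d(y)]=[x,D(y)]$ for all $x,y$. *)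

theory Defs
  imports Complex_Main "HOL-Library.Function_Algebras"
begin

text \<open>Elements of the algebra are coordinate functions bas => complex supported on the
  basis of size n+2 (pointwise addition from Function_Algebras).\<close>

datatype bas = H1 | H2 | E nat

definition Bas :: "nat \<Rightarrow> bas set" where
  "Bas n = {H1, H2} \<union> E ` {1..n}"

definition Lsp :: "nat \<Rightarrow> (bas \<Rightarrow> complex) set" where
  "Lsp n = {x. \<forall>b. b \<notin> Bas n \<longrightarrow> x b = 0}"

definition scl :: "complex \<Rightarrow> (bas \<Rightarrow> complex) \<Rightarrow> (bas \<Rightarrow> complex)" where
  "scl c v = (\<lambda>k. c * v k)"

definition ind :: "bas \<Rightarrow> (bas \<Rightarrow> complex)" where
  "ind b = (\<lambda>k. if k = b then 1 else 0)"

definition h1 :: "bas \<Rightarrow> complex" where "h1 = ind H1"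
definition h2 :: "bas \<Rightarrow> complex" where "h2 = ind H2"

text \<open>e_i in the n-dimensional algebra; e_i = 0 outside 1..n (in particular e_{n+1} = 0).\<close>
definition ee :: "nat \<Rightarrow> nat \<Rightarrow> (bas \<Rightarrow> complex)" where
  "ee n i = (if 1 \<le> i \<and> i \<le> n then ind (E i) else 0)"

text \<open>Bracket from structure constants c (c a b = [a,b] on basis elements), extended bilinearly.\<close>
definition br :: "(bas \<Rightarrow> bas \<Rightarrow> (bas \<Rightarrow> complex)) \<Rightarrow> nat \<Rightarrow>
    (bas \<Rightarrow> complex) \<Rightarrow> (bas \<Rightarrow> complex) \<Rightarrow> (bas \<Rightarrow> complex)" where
  "br c n x y = (\<lambda>k. \<Sum>a\<in>Bas n. \<Sum>b\<in>Bas n. x a * y b * c a b k)"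

definition c1 :: "nat \<Rightarrow> bas \<Rightarrow> bas \<Rightarrow> (bas \<Rightarrow> complex)" where
  "c1 n a b = (case (a, b) of
      (E i, E j) \<Rightarrow> (if j = 1 \<and> i = 1 then ee n 3
                    else if j = 1 \<and> 3 \<le> i \<and> i \<le> n - 1 then ee n (i + 1) else 0)
    | (E i, H2) \<Rightarrow> (if i = 1 then ee n 1
                    else if 3 \<le> i \<and> i \<le> n then scl (of_nat (i - 1)) (ee n i) else 0)
    | (H2, E i) \<Rightarrow> (if i = 1 then scl (-1) (ee n 1) else 0)
    | (E i, H1) \<Rightarrow> (if i = 2 then ee n 2 else 0)
    | (H1, E i) \<Rightarrow> (if i = 2 then scl (-1) (ee n 2) else 0)
    | _ \<Rightarrow> 0)"

definition c2 :: "nat \<Rightarrow> bas \<Rightarrow> bas \<Rightarrow> (bas \<Rightarrow> complex)" where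
  "c2 n a b = (if a = H1 \<and> b = E 2 then 0 else c1 n a b)"

definition lin :: "nat \<Rightarrow> ((bas \<Rightarrow> complex) \<Rightarrow> (bas \<Rightarrow> complex)) \<Rightarrow> bool" where
  "lin n f \<longleftrightarrow> (\<forall>x\<in>Lsp n. f x \<in> Lsp n)
     \<and> (\<forall>x\<in>Lsp n. \<forall>y\<in>Lsp n. f (x + y) = f x + f y)
     \<and> (\<forall>c. \<forall>x\<in>Lsp n. f (scl c x) = scl c (f x))"

definition is_der :: "(bas \<Rightarrow> bas \<Rightarrow> (bas \<Rightarrow> complex)) \<Rightarrow> nat \<Rightarrow>
    ((bas \<Rightarrow> complex) \<Rightarrow> (bas \<Rightarrow> complex)) \<Rightarrow> bool" where
  "is_der c n d \<longleftrightarrow> lin n d \<and>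
     (\<forall>x\<in>Lsp n. \<forall>y\<in>Lsp n. d (br c n x y) = br c n (d x) y + br c n x (d y))"

definition is_antider :: "(bas \<Rightarrow> bas \<Rightarrow> (bas \<Rightarrow> complex)) \<Rightarrow> nat \<Rightarrow>
    ((bas \<Rightarrow> complex) \<Rightarrow> (bas \<Rightarrow> complex)) \<Rightarrow> bool" where
  "is_antider c n D \<longleftrightarrow> lin n D \<and>
     (\<forall>x\<in>Lsp n. \<forall>y\<in>Lsp n. D (br c n x y) = br c n (D x) y - br c n (D y) x)"

definition is_bider :: "(bas \<Rightarrow> bas \<Rightarrow> (bas \<Rightarrow> complex)) \<Rightarrow> nat \<Rightarrow>
    ((bas \<Rightarrow> complex) \<Rightarrow> (bas \<Rightarrow> complex)) \<Rightarrow> ((bas \<Rightarrow> complex) \<Rightarrow> (bas \<Rightarrow> complex)) \<Rightarrow> bool" where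
  "is_bider c n d D \<longleftrightarrow> is_der c n d \<and> is_antider c n D \<and>
     (\<forall>x\<in>Lsp n. \<forall>y\<in>Lsp n. br c n x (d y) = br c n x (D y))"

end

theory Submission
  imports Defs
begin

(*
  Both algebras are treated at once as L_t, where the flag t switches the product
  [h1,e2] = -e2 on (L1) or off (L2).

  Necessity: evaluating the derivation identity on pairs of basis vectors and reading off
  coordinates determines d on h1, h2, e1, e2, and then on e_i by induction, since
  e_(i+1) = [e_i,e_1].  The condition [x,d y] = [x,D y] for x = e1, e2, h1 fixes the
  H1, H2, E1 (and, in L1, the E2) coordinates of D y to be those of d y; the anti-derivation
  identity on the remaining basis pairs (h1 or h2 against the basis) gives the rest of D.

  Sufficiency: the maps with the stated values on the basis, written in coordinates, satisfy
  the three identities by direct computation, and a linear map is determined by its values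
  on the basis.
*)

type_synonym vec = "bas \<Rightarrow> complex"

lemma sum_fun_apply: "(sum f A) k = (\<Sum>a\<in>A. f a k)"
  by (induction A rule: infinite_finite_induct) auto

lemma sum_Bas: "(\<Sum>a\<in>Bas n. f a) = f H1 + f H2 + (\<Sum>j=1..n. f (E j))"
proof -
  have "Bas n = insert H1 (insert H2 (E ` {1..n}))" by (auto simp: Bas_def)
  moreover have "inj_on E {1..n}" by (auto simp: inj_on_def)
  ultimately show ?thesis by (simp add: sum.reindex add.assoc image_iff)
qed

definition Lt_br :: "bool \<Rightarrow> nat \<Rightarrow> vec \<Rightarrow> vec \<Rightarrow> vec" where
  "Lt_br t n x y k = (case k of
      E m \<Rightarrow>
        if m = 1 then x (E 1) * y H2 - x H2 * y (E 1)
        else if m = 2 then x (E 2) * y H1 - (if t then x H1 * y (E 2) else 0)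
        else if m = 3 then x (E 1) * y (E 1) + 2 * x (E 3) * y H2
        else if 4 \<le> m \<and> m \<le> n then x (E (m - 1)) * y (E 1) + of_nat (m - 1) * x (E m) * y H2
        else 0
    | _ \<Rightarrow> 0)"

lemma structure_constants_apply:
  assumes "4 \<le> n"
  shows "(if t then c1 n else c2 n) a b k = (case k of
      E m \<Rightarrow>
        if m = 1 then (if a = E 1 \<and> b = H2 then 1 else 0) + (if a = H2 \<and> b = E 1 then -1 else 0)
        else if m = 2 then (if a = E 2 \<and> b = H1 then 1 else 0) + (if t \<and> a = H1 \<and> b = E 2 then -1 else 0)
        else if m = 3 then (if a = E 1 \<and> b = E 1 then 1 else 0) + (if a = E 3 \<and> b = H2 then 2 else 0)
        else if 4 \<le> m \<and> m \<le> n then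
          (if a = E (m - 1) \<and> b = E 1 then 1 else 0) + (if a = E m \<and> b = H2 then of_nat (m - 1) else 0)
        else 0
    | _ \<Rightarrow> 0)"
  using assms
  by (cases a; cases b; cases k) (auto simp: c1_def c2_def ee_def ind_def scl_def)

lemma br_eq_Lt_br:
  assumes "4 \<le> n"
  shows "br (if t then c1 n else c2 n) n x y = Lt_br t n x y"
proof
  fix k
  have if_conj: "\<And>P Q a. (if P \<and> Q then a else 0) = (if P then if Q then a else 0 else 0)"
    and sum_if_const: "\<And>P f A. (\<Sum>j\<in>A. if P then f j else 0) = (if P then sum f A else 0)"
    by simp_all
  show "br (if t then c1 n else c2 n) n x y k = Lt_br t n x y k"
  proof (cases k)
    case (E m)
    have "m = 1 \<or> m = 2 \<or> m = 3 \<or> 4 \<le> m \<and> m \<le> n \<or> m = 0 \<or> n < m" by auto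
    then show ?thesis
      using assms unfolding br_def Lt_br_def E structure_constants_apply[OF assms] sum_Bas
      by (elim disjE) (auto simp: if_distrib[of "\<lambda>z. _ * z"] sum.distrib if_conj sum_if_const cong: if_cong)
  qed (auto simp: br_def Lt_br_def structure_constants_apply[OF assms])
qed

lemma Lsp_add: "x \<in> Lsp n \<Longrightarrow> y \<in> Lsp n \<Longrightarrow> x + y \<in> Lsp n"
  by (auto simp: Lsp_def)

lemma Lsp_scl: "x \<in> Lsp n \<Longrightarrow> scl c x \<in> Lsp n"
  by (auto simp: Lsp_def scl_def)

lemma Lsp_zero [simp]: "0 \<in> Lsp n"
  by (auto simp: Lsp_def)

lemma Lsp_sum: "(\<And>a. a \<in> A \<Longrightarrow> f a \<in> Lsp n) \<Longrightarrow> sum f A \<in> Lsp n"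
  by (induction A rule: infinite_finite_induct) (auto simp: Lsp_zero Lsp_add)

lemma Lsp_ind: "a \<in> Bas n \<Longrightarrow> ind a \<in> Lsp n"
  by (auto simp: Lsp_def ind_def)

lemma Lsp_basis [simp]: "h1 \<in> Lsp n" "h2 \<in> Lsp n" "ee n i \<in> Lsp n"
  by (auto simp: Lsp_def h1_def h2_def ee_def ind_def Bas_def)

lemma Lsp_Lt_br: "4 \<le> n \<Longrightarrow> Lt_br t n x y \<in> Lsp n"
  by (auto simp: Lsp_def Lt_br_def Bas_def split: bas.split)

lemma Lsp_E_outside: "x \<in> Lsp n \<Longrightarrow> m = 0 \<or> n < m \<Longrightarrow> x (E m) = 0"
  unfolding Lsp_def by (drule CollectD, drule spec[of _ "E m"]) (auto simp: Bas_def)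

lemma Lsp_eqI:
  assumes "x \<in> Lsp n" "y \<in> Lsp n" "x H1 = y H1" "x H2 = y H2"
    and "\<And>m. 1 \<le> m \<Longrightarrow> m \<le> n \<Longrightarrow> x (E m) = y (E m)"
  shows "x = y"
proof
  fix k
  show "x k = y k"
  proof (cases k)
    case (E m)
    then show ?thesis
      using assms Lsp_E_outside[OF assms(1), of m] Lsp_E_outside[OF assms(2), of m]
      by (cases "1 \<le> m \<and> m \<le> n") auto
  qed (use assms in auto)
qed

lemma Lsp_expansion: "x \<in> Lsp n \<Longrightarrow> x = (\<Sum>a\<in>Bas n. scl (x a) (ind a))"
proof
  fix k
  assume x: "x \<in> Lsp n"
  have "(\<Sum>a\<in>Bas n. scl (x a) (ind a)) k = (\<Sum>a\<in>Bas n. if a = k then x k else 0)"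
    unfolding sum_fun_apply by (rule sum.cong) (auto simp: scl_def ind_def)
  also have "\<dots> = x k"
    using x by (auto simp: Lsp_def Bas_def)
  finally show "x k = (\<Sum>a\<in>Bas n. scl (x a) (ind a)) k" by simp
qed

lemma lin_zero: "lin n f \<Longrightarrow> f 0 = 0"
  using Lsp_zero[of n] unfolding lin_def by (metis add_cancel_right_left)

lemma lin_sum:
  assumes "lin n f" "\<And>a. a \<in> A \<Longrightarrow> v a \<in> Lsp n"
  shows "f (sum v A) = (\<Sum>a\<in>A. f (v a))"
  using assms(2)
proof (induction A rule: infinite_finite_induct)
  case (insert a A)
  then have IH: "f (sum v A) = (\<Sum>a\<in>A. f (v a))"
    by simp
  have "f (sum v (insert a A)) = f (v a + sum v A)"
    using insert by simp
  also have "\<dots> = f (v a) + f (sum v A)"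
    using insert assms(1) Lsp_sum[of A v n] by (auto simp: lin_def)
  also have "\<dots> = (\<Sum>a\<in>insert a A. f (v a))"
    using insert(1,2) IH by simp
  finally show ?case .
qed (simp_all add: lin_zero[OF assms(1)])

lemma lin_eq_on_Bas:
  assumes "lin n f" "lin n g" "\<And>a. a \<in> Bas n \<Longrightarrow> f (ind a) = g (ind a)" "x \<in> Lsp n"
  shows "f x = g x"
proof -
  have terms: "\<And>a. a \<in> Bas n \<Longrightarrow> scl (x a) (ind a) \<in> Lsp n"
    by (intro Lsp_scl Lsp_ind)
  have "f x = (\<Sum>a\<in>Bas n. f (scl (x a) (ind a)))"
    by (subst Lsp_expansion[OF assms(4)]) (rule lin_sum[OF assms(1) terms])
  also have "\<dots> = (\<Sum>a\<in>Bas n. g (scl (x a) (ind a)))"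
    using assms(1-3) Lsp_ind by (intro sum.cong) (auto simp: lin_def)
  also have "\<dots> = g x"
    by (subst (2) Lsp_expansion[OF assms(4)]) (rule lin_sum[OF assms(2) terms, symmetric])
  finally show ?thesis .
qed

lemma lin_eq_on_generators:
  assumes "lin n f" "lin n g" "f h1 = g h1" "f h2 = g h2"
    and "\<And>j. 1 \<le> j \<Longrightarrow> j \<le> n \<Longrightarrow> f (ee n j) = g (ee n j)" "x \<in> Lsp n"
  shows "f x = g x"
  by (rule lin_eq_on_Bas[OF assms(1,2) _ assms(6)])
    (use assms(3-5) in \<open>auto simp: Bas_def h1_def h2_def ee_def\<close>)

lemma h1_apply: "h1 k = (if k = H1 then 1 else 0)"
  by (simp add: h1_def ind_def)

lemma h2_apply: "h2 k = (if k = H2 then 1 else 0)"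
  by (simp add: h2_def ind_def)

lemma ee_apply: "ee n i k = (if k = E i \<and> 1 \<le> i \<and> i \<le> n then 1 else 0)"
  by (simp add: ee_def ind_def)

lemma scl_apply: "scl c v k = c * v k"
  by (simp add: scl_def)

lemmas coord_simps = Lt_br_def h1_apply h2_apply ee_apply scl_apply

lemma Lt_br_basis:
  assumes "4 \<le> n"
  shows "Lt_br t n h1 h1 = 0" "Lt_br t n h1 h2 = 0" "Lt_br t n h2 h1 = 0" "Lt_br t n h2 h2 = 0"
    and "Lt_br t n h1 (ee n 1) = 0" "Lt_br t n h2 (ee n 1) = scl (-1) (ee n 1)"
    and "Lt_br t n h1 (ee n 2) = (if t then scl (-1) (ee n 2) else 0)" "Lt_br t n h2 (ee n 2) = 0"
    and "Lt_br t n (ee n 2) h1 = ee n 2" "Lt_br t n (ee n 2) h2 = 0"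
    and "Lt_br t n (ee n 1) (ee n 1) = ee n 3"
    and "3 \<le> i \<Longrightarrow> Lt_br t n h1 (ee n i) = 0" "3 \<le> i \<Longrightarrow> Lt_br t n h2 (ee n i) = 0"
    and "3 \<le> i \<Longrightarrow> i \<le> n \<Longrightarrow> Lt_br t n (ee n i) (ee n 1) = ee n (i + 1)"
  using assms by (auto simp: fun_eq_iff coord_simps split: bas.split)

lemma Lt_br_chain_base:
  assumes "4 \<le> n"
  shows "Lt_br t n (scl a (ee n 1) + scl c (ee n 3)) (ee n 1) + Lt_br t n (ee n 1) (scl a (ee n 1) + scl c (ee n 3))
    = scl (2 * a) (ee n 3) + scl c (ee n 4)"
  using assms by (auto simp: fun_eq_iff coord_simps split: bas.split)

lemma Lt_br_chain_step:
  assumes "3 \<le> i" "i + 1 \<le> n"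
  shows "Lt_br t n (scl (of_nat (i - 1) * a) (ee n i) + scl c (ee n (i + 1))) (ee n 1)
      + Lt_br t n (ee n i) (scl a (ee n 1) + scl c (ee n 3))
    = scl (of_nat i * a) (ee n (i + 1)) + scl c (ee n (i + 2))" (is "?lhs = ?rhs")
proof
  fix k
  show "?lhs k = ?rhs k"
  proof (cases k)
    case (E m)
    have "m \<le> 3 \<or> m = i + 1 \<or> m = i + 2 \<or> 4 \<le> m \<and> m \<noteq> i + 1 \<and> m \<noteq> i + 2"
      by auto
    then show ?thesis
      using assms unfolding E by (elim disjE) (auto simp: coord_simps of_nat_diff algebra_simps)
  qed (simp_all add: coord_simps)
qed

definition der_shape ::
    "nat \<Rightarrow> complex \<Rightarrow> complex \<Rightarrow> complex \<Rightarrow> complex \<Rightarrow> (vec \<Rightarrow> vec) \<Rightarrow> bool" where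
  "der_shape n a1 a2 a3 a4 d \<longleftrightarrow>
     d h1 = scl (- a2) (ee n 2) \<and>
     d h2 = scl (- a1) (ee n 1) \<and>
     d (ee n 1) = scl a4 (ee n 1) + scl a1 (ee n 3) \<and>
     d (ee n 2) = scl a3 (ee n 2) \<and>
     (\<forall>i. 3 \<le> i \<and> i \<le> n \<longrightarrow>
        d (ee n i) = scl (of_nat (i - 1) * a4) (ee n i) + scl a1 (ee n (i + 1)))"

locale Lt_derivation =
  fixes t :: bool and n :: nat and d :: "vec \<Rightarrow> vec"
  assumes n_ge_4: "4 \<le> n" and lin_d: "lin n d"
    and der: "\<And>x y. x \<in> Lsp n \<Longrightarrow> y \<in> Lsp n \<Longrightarrow> d (Lt_br t n x y) = Lt_br t n (d x) y + Lt_br t n x (d y)"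
begin

lemma d_zero: "d 0 = 0"
  by (rule lin_zero[OF lin_d])

lemma d_Lsp: "x \<in> Lsp n \<Longrightarrow> d x \<in> Lsp n"
  using lin_d by (simp add: lin_def)

lemma der_apply: "x \<in> Lsp n \<Longrightarrow> y \<in> Lsp n \<Longrightarrow> d (Lt_br t n x y) k = Lt_br t n (d x) y k + Lt_br t n x (d y) k"
  by (simp add: der)

lemma d_scl: "x \<in> Lsp n \<Longrightarrow> d (scl c x) = scl c (d x)"
  using lin_d by (simp add: lin_def)

text \<open>\<open>simplified\<close> rewrites \<open>ee n 1\<close> to its simp normal form \<open>ee n (Suc 0)\<close>, so that
  these rules still match after simplification.\<close>
lemmas der_simps = Lt_br_basis[OF n_ge_4, simplified] d_zero d_scl coord_simps

lemma d_h1: "d h1 = scl (d h1 (E 2)) (ee n 2)"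
proof -
  have "d h1 (E m) = 0" if "1 \<le> m" "m \<le> n" "m \<noteq> 2" for m
    using der_apply[of h1 h2 "E m"] that n_ge_4 by (auto simp: der_simps cong: if_cong split: if_split_asm)
  moreover have "d h1 H2 = 0"
    using der_apply[of h1 "ee n 1" "E 1"] n_ge_4 by (simp add: der_simps cong: if_cong)
  moreover have "d h1 H1 = 0"
    using der_apply[of "ee n 2" h1 "E 2"] n_ge_4 by (simp add: der_simps cong: if_cong)
  ultimately show ?thesis
    by (intro Lsp_eqI[where n = n] d_Lsp Lsp_scl Lsp_basis) (auto simp: coord_simps)
qed

lemma d_h1_E2_L2: "\<not> t \<Longrightarrow> d h1 (E 2) = 0"
  using der_apply[of h1 h1 "E 2"] n_ge_4 by (simp add: der_simps cong: if_cong)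

lemma d_h2: "d h2 = scl (d h2 (E 1)) (ee n 1)"
proof -
  have "d h2 (E m) = 0" if "2 \<le> m" "m \<le> n" for m
  proof (cases "m = 2")
    case True
    then show ?thesis
      using der_apply[of h2 h1 "E 2"] n_ge_4 by (simp add: der_simps cong: if_cong)
  next
    case False
    then show ?thesis
      using der_apply[of h2 h2 "E m"] that n_ge_4 by (auto simp: der_simps cong: if_cong split: if_split_asm)
  qed
  moreover have "d h2 H1 = 0"
    using der_apply[of "ee n 2" h2 "E 2"] n_ge_4 by (simp add: der_simps cong: if_cong)
  moreover have "d h2 H2 = 0"
    using der_apply[of h2 "ee n 1" "E 1"] n_ge_4 by (simp add: der_simps cong: if_cong)
  ultimately show ?thesis
    by (intro Lsp_eqI[where n = n] d_Lsp Lsp_scl Lsp_basis) (auto simp: coord_simps)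
qed

lemma d_e2: "d (ee n 2) = scl (d (ee n 2) (E 2)) (ee n 2)"
proof -
  have "d (ee n 2) (E m) = 0" if "1 \<le> m" "m \<le> n" "m \<noteq> 2" for m
    using der_apply[of "ee n 2" h1 "E m"] that n_ge_4 by (auto simp: der_simps cong: if_cong split: if_split_asm)
  moreover have "d (ee n 2) H1 = 0" "d (ee n 2) H2 = 0"
    using der_apply[of "ee n 2" h1 H1] der_apply[of "ee n 2" h1 H2] by (simp_all add: der_simps cong: if_cong)
  ultimately show ?thesis
    by (intro Lsp_eqI[where n = n] d_Lsp Lsp_scl Lsp_basis) (auto simp: coord_simps)
qed

lemma d_e1: "d (ee n 1) = scl (d (ee n 1) (E 1)) (ee n 1) + scl (- d h2 (E 1)) (ee n 3)"
proof (rule Lsp_eqI[where n = n])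
  fix m
  assume "1 \<le> m" "m \<le> n"
  then show "d (ee n 1) (E m) = (scl (d (ee n 1) (E 1)) (ee n 1) + scl (- d h2 (E 1)) (ee n 3)) (E m)"
    using der_apply[of h2 "ee n 1" "E m"] fun_cong[OF d_h2, of "E (m - 1)"] fun_cong[OF d_h2, of H2] n_ge_4
    by (auto simp: der_simps minus_equation_iff cong: if_cong split: if_split_asm)
qed (use der_apply[of h2 "ee n 1" H1] der_apply[of h2 "ee n 1" H2] in
      \<open>simp_all add: d_Lsp Lsp_add Lsp_scl der_simps\<close>)

lemma d_e:
  assumes "3 \<le> i" "i \<le> n"
  shows "d (ee n i) = scl (of_nat (i - 1) * d (ee n 1) (E 1)) (ee n i) + scl (- d h2 (E 1)) (ee n (i + 1))"
proof -
  define a c where "a = d (ee n 1) (E 1)" and "c = - d h2 (E 1)"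
  have e1: "d (ee n 1) = scl a (ee n 1) + scl c (ee n 3)"
    unfolding a_def c_def by (rule d_e1)
  have "d (ee n i) = scl (of_nat (i - 1) * a) (ee n i) + scl c (ee n (i + 1))"
    using assms
  proof (induction i rule: nat_induct_at_least)
    case base
    have "d (ee n 3) = d (Lt_br t n (ee n 1) (ee n 1))"
      using Lt_br_basis[OF n_ge_4] by simp
    also have "\<dots> = Lt_br t n (d (ee n 1)) (ee n 1) + Lt_br t n (ee n 1) (d (ee n 1))"
      by (rule der) simp_all
    also have "\<dots> = scl (2 * a) (ee n 3) + scl c (ee n 4)"
      unfolding e1 by (rule Lt_br_chain_base[OF n_ge_4])
    finally show ?case
      by simp
  next
    case (Suc i)
    then have IH: "d (ee n i) = scl (of_nat (i - 1) * a) (ee n i) + scl c (ee n (i + 1))"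
      by (simp add: fun_eq_iff)
    have "d (ee n (Suc i)) = d (Lt_br t n (ee n i) (ee n 1))"
      using Lt_br_basis[OF n_ge_4] Suc by simp
    also have "\<dots> = Lt_br t n (d (ee n i)) (ee n 1) + Lt_br t n (ee n i) (d (ee n 1))"
      by (rule der) simp_all
    also have "\<dots> = scl (of_nat i * a) (ee n (i + 1)) + scl c (ee n (i + 2))"
      unfolding IH e1 by (rule Lt_br_chain_step) (use Suc in simp_all)
    finally show ?case
      by simp
  qed
  then show ?thesis
    by (simp add: a_def c_def)
qed

lemma der_shape_d: "der_shape n (- d h2 (E 1)) (- d h1 (E 2)) (d (ee n 2) (E 2)) (d (ee n 1) (E 1)) d"
  unfolding der_shape_def using d_h1 d_h2 d_e1 d_e2 d_e by simp

end

lemma sum_scl_ee_E: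
  "finite S \<Longrightarrow> (\<Sum>i\<in>S. scl (f i) (ee n i)) (E m) = (if m \<in> S \<and> 1 \<le> m \<and> m \<le> n then f m else 0)"
proof -
  assume "finite S"
  have "(\<Sum>i\<in>S. scl (f i) (ee n i)) (E m) = (\<Sum>i\<in>S. if i = m then (if 1 \<le> m \<and> m \<le> n then f m else 0) else 0)"
    unfolding sum_fun_apply by (rule sum.cong) (auto simp: scl_apply ee_apply)
  with \<open>finite S\<close> show ?thesis
    by simp
qed

lemma sum_scl_ee_H: "(\<Sum>i\<in>S. scl (f i) (ee n i)) H1 = 0" "(\<Sum>i\<in>S. scl (f i) (ee n i)) H2 = 0"
  unfolding sum_fun_apply by (simp_all add: scl_apply ee_apply)

definition antider_shape ::
    "nat \<Rightarrow> complex \<Rightarrow> complex \<Rightarrow> complex \<Rightarrow> complex \<Rightarrow> (nat \<Rightarrow> complex) \<Rightarrow>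
      (vec \<Rightarrow> vec) \<Rightarrow> bool" where
  "antider_shape n a1 a4 g e b D \<longleftrightarrow>
     D h1 = scl g (ee n 2) \<and>
     D h2 = scl (- a1) (ee n 1) + (\<Sum>i = 3..n - 1. scl (of_nat (i - 1) * b (i + 1)) (ee n i))
            + scl (b (n + 1)) (ee n n) \<and>
     D (ee n 1) = scl a4 (ee n 1) + scl (- a1) (ee n 3) + (\<Sum>i = 4..n. scl (b i) (ee n i)) \<and>
     D (ee n 2) = scl e (ee n 2) \<and>
     (\<forall>i. 3 \<le> i \<and> i \<le> n \<longrightarrow> D (ee n i) = 0)"

locale Lt_biderivation = Lt_derivation +
  fixes D :: "vec \<Rightarrow> vec"
  assumes lin_D: "lin n D"
    and antider: "\<And>x y. x \<in> Lsp n \<Longrightarrow> y \<in> Lsp n \<Longrightarrow> D (Lt_br t n x y) = Lt_br t n (D x) y - Lt_br t n (D y) x"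
    and compat: "\<And>x y. x \<in> Lsp n \<Longrightarrow> y \<in> Lsp n \<Longrightarrow> Lt_br t n x (d y) = Lt_br t n x (D y)"
begin

lemma D_Lsp: "x \<in> Lsp n \<Longrightarrow> D x \<in> Lsp n"
  using lin_D by (simp add: lin_def)

lemma D_scl: "x \<in> Lsp n \<Longrightarrow> D (scl c x) = scl c (D x)"
  using lin_D by (simp add: lin_def)

lemma antider_apply:
  "x \<in> Lsp n \<Longrightarrow> y \<in> Lsp n \<Longrightarrow> D (Lt_br t n x y) k = Lt_br t n (D x) y k - Lt_br t n (D y) x k"
  by (simp add: antider)

lemmas antider_simps = Lt_br_basis[OF n_ge_4, simplified] lin_zero[OF lin_D] D_scl coord_simps

text \<open>Left multiplication by \<open>e\<^sub>1\<close>, \<open>e\<^sub>2\<close> and \<open>h\<^sub>1\<close> reads off these coordinates of its argument.\<close>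
lemma compat_coords:
  assumes "y \<in> Lsp n"
  shows "D y H1 = d y H1" "D y H2 = d y H2" "D y (E 1) = d y (E 1)" "t \<Longrightarrow> D y (E 2) = d y (E 2)"
proof -
  have "Lt_br t n x (d y) k = Lt_br t n x (D y) k" if "x \<in> Lsp n" for x k
    using compat[OF that assms] by simp
  from this[of "ee n 2" "E 2"] this[of "ee n 1" "E 1"] this[of "ee n 1" "E 3"] this[of h1 "E 2"]
  show "D y H1 = d y H1" "D y H2 = d y H2" "D y (E 1) = d y (E 1)" "t \<Longrightarrow> D y (E 2) = d y (E 2)"
    using n_ge_4 by (simp_all add: coord_simps cong: if_cong)
qed

lemma D_e:
  assumes "3 \<le> i" "i \<le> n"
  shows "D (ee n i) = 0"
proof (rule Lsp_eqI[where n = n])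
  fix m
  assume m: "1 \<le> m" "m \<le> n"
  consider "m = 1" | "m = 2" | "3 \<le> m"
    using m by linarith
  then show "D (ee n i) (E m) = 0 (E m)"
  proof cases
    case 1
    then show ?thesis
      using assms compat_coords(3)[of "ee n i"] d_e[OF assms] by (simp add: coord_simps)
  next
    case 2
    then show ?thesis
      using assms antider_apply[of h1 "ee n i" "E 2"] by (simp add: antider_simps cong: if_cong)
  next
    case 3
    then show ?thesis
      using m assms antider_apply[of h2 "ee n i" "E m"]
      by (auto simp: antider_simps cong: if_cong split: if_split_asm)
  qed
qed (use assms compat_coords(1,2)[of "ee n i"] d_e[OF assms] in \<open>simp_all add: D_Lsp coord_simps\<close>)

lemma D_h1: "D h1 = scl (D h1 (E 2)) (ee n 2)"
proof (rule Lsp_eqI[where n = n])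
  fix m
  assume m: "1 \<le> m" "m \<le> n"
  consider "m = 1" | "m = 2" | "3 \<le> m"
    using m by linarith
  then show "D h1 (E m) = scl (D h1 (E 2)) (ee n 2) (E m)"
  proof cases
    case 1
    then show ?thesis
      using compat_coords(3)[of h1] fun_cong[OF d_h1, of "E 1"] by (simp add: coord_simps)
  next
    case 3
    then show ?thesis
      using m antider_apply[of h2 h1 "E m"] by (auto simp: antider_simps cong: if_cong split: if_split_asm)
  qed (use n_ge_4 in \<open>simp add: coord_simps\<close>)
qed (use compat_coords(1,2)[of h1] fun_cong[OF d_h1, of H1] fun_cong[OF d_h1, of H2] in
      \<open>simp_all add: D_Lsp Lsp_scl coord_simps\<close>)

lemma D_e2: "D (ee n 2) = scl (D (ee n 2) (E 2)) (ee n 2)"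
proof (rule Lsp_eqI[where n = n])
  fix m
  assume m: "1 \<le> m" "m \<le> n"
  consider "m = 1" | "m = 2" | "3 \<le> m"
    using m by linarith
  then show "D (ee n 2) (E m) = scl (D (ee n 2) (E 2)) (ee n 2) (E m)"
  proof cases
    case 1
    then show ?thesis
      using compat_coords(3)[of "ee n 2"] fun_cong[OF d_e2, of "E 1"] by (simp add: coord_simps)
  next
    case 3
    then show ?thesis
      using m antider_apply[of h2 "ee n 2" "E m"] by (auto simp: antider_simps cong: if_cong split: if_split_asm)
  qed (use n_ge_4 in \<open>simp add: coord_simps\<close>)
qed (use compat_coords(1,2)[of "ee n 2"] fun_cong[OF d_e2, of H1] fun_cong[OF d_e2, of H2] in
      \<open>simp_all add: D_Lsp Lsp_scl coord_simps\<close>)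

lemma D_e2_E2: "D (ee n 2) (E 2) = (if t then d (ee n 2) (E 2) else 0)"
  using compat_coords(4)[of "ee n 2"] antider_apply[of h1 "ee n 2" "E 2"] n_ge_4
  by (auto simp: antider_simps cong: if_cong)

lemma D_h2:
  "D h2 = scl (d h2 (E 1)) (ee n 1) + (\<Sum>i = 3..n - 1. scl (of_nat (i - 1) * D (ee n 1) (E (i + 1))) (ee n i))
     + scl (D h2 (E n)) (ee n n)" (is "_ = ?rhs")
proof (rule Lsp_eqI[where n = n])
  fix m
  assume m: "1 \<le> m" "m \<le> n"
  consider "m = 1" | "m = 2" | "3 \<le> m" "m < n" | "m = n"
    using m by linarith
  then show "D h2 (E m) = ?rhs (E m)"
  proof cases
    case 1
    then show ?thesis
      using n_ge_4 compat_coords(3)[of h2] fun_cong[OF d_h2, of "E 1"]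
      by (simp add: sum_scl_ee_E coord_simps)
  next
    case 2
    then show ?thesis
      using n_ge_4 antider_apply[of h1 h2 "E 2"] by (simp add: sum_scl_ee_E antider_simps cong: if_cong)
  next
    case 3
    then have "m \<le> n - 1"
      by simp
    \<comment> \<open>The \<open>E (m + 1)\<close> coordinate of \<open>D [h2, e1] = - D e1\<close> gives
      \<open>D h2 (E m) = (m - 1) * D (ee n 1) (E (m + 1))\<close>.\<close>
    with 3 show ?thesis
      using antider_apply[of h2 "ee n 1" "E (m + 1)"]
      by (simp add: sum_scl_ee_E antider_simps algebra_simps cong: if_cong)
  next
    case 4
    then show ?thesis
      using n_ge_4 by (auto simp: sum_scl_ee_E coord_simps)
  qed
qed (use compat_coords(1,2)[of h2] fun_cong[OF d_h2, of H1] fun_cong[OF d_h2, of H2] in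
      \<open>simp_all add: D_Lsp Lsp_add Lsp_scl Lsp_sum sum_scl_ee_H coord_simps\<close>)

lemma D_e1:
  "D (ee n 1) = scl (d (ee n 1) (E 1)) (ee n 1) + scl (d h2 (E 1)) (ee n 3)
     + (\<Sum>i = 4..n. scl (D (ee n 1) (E i)) (ee n i))" (is "_ = ?rhs")
proof (rule Lsp_eqI[where n = n])
  fix m
  assume m: "1 \<le> m" "m \<le> n"
  consider "m = 1" | "m = 2" | "m = 3" | "4 \<le> m"
    using m by linarith
  then show "D (ee n 1) (E m) = ?rhs (E m)"
  proof cases
    case 1
    then show ?thesis
      using n_ge_4 compat_coords(3)[of "ee n 1"] by (simp add: sum_scl_ee_E coord_simps)
  next
    case 2
    then show ?thesis
      using n_ge_4 antider_apply[of h2 "ee n 1" "E 2"] by (simp add: sum_scl_ee_E antider_simps cong: if_cong)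
  next
    case 3
    then show ?thesis
      using n_ge_4 antider_apply[of h2 "ee n 1" "E 3"] compat_coords(3)[of h2]
      by (simp add: sum_scl_ee_E antider_simps cong: if_cong)
  next
    case 4
    then show ?thesis
      using m by (simp add: sum_scl_ee_E coord_simps)
  qed
qed (use compat_coords(1,2)[of "ee n 1"] fun_cong[OF d_e1, of H1] fun_cong[OF d_e1, of H2] in
      \<open>simp_all add: D_Lsp Lsp_add Lsp_scl Lsp_sum sum_scl_ee_H coord_simps\<close>)

lemma antider_shape_D:
  defines "b \<equiv> \<lambda>i. if i = n + 1 then D h2 (E n) else D (ee n 1) (E i)"
  shows "antider_shape n (- d h2 (E 1)) (d (ee n 1) (E 1)) (D h1 (E 2)) (D (ee n 2) (E 2)) b D"
proof -
  have "(\<Sum>i = 3..n - 1. scl (of_nat (i - 1) * b (i + 1)) (ee n i))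
      = (\<Sum>i = 3..n - 1. scl (of_nat (i - 1) * D (ee n 1) (E (i + 1))) (ee n i))"
    "(\<Sum>i = 4..n. scl (b i) (ee n i)) = (\<Sum>i = 4..n. scl (D (ee n 1) (E i)) (ee n i))"
    by (intro sum.cong refl; auto simp: b_def)+
  then show ?thesis
    unfolding antider_shape_def using D_h1 D_h2 D_e1 D_e2 D_e by (simp add: b_def)
qed

end

definition der_map ::
    "nat \<Rightarrow> complex \<Rightarrow> complex \<Rightarrow> complex \<Rightarrow> complex \<Rightarrow> vec \<Rightarrow> vec" where
  "der_map n a1 a2 a3 a4 x k = (case k of
      E m \<Rightarrow>
        if m = 1 then a4 * x (E 1) - a1 * x H2
        else if m = 2 then a3 * x (E 2) - a2 * x H1
        else if m = 3 then a1 * x (E 1) + 2 * a4 * x (E 3)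
        else if 4 \<le> m \<and> m \<le> n then of_nat (m - 1) * a4 * x (E m) + a1 * x (E (m - 1))
        else 0
    | _ \<Rightarrow> 0)"

definition antider_map ::
    "nat \<Rightarrow> complex \<Rightarrow> complex \<Rightarrow> complex \<Rightarrow> complex \<Rightarrow> (nat \<Rightarrow> complex) \<Rightarrow> vec \<Rightarrow> vec" where
  "antider_map n a1 a4 g e b x k = (case k of
      E m \<Rightarrow>
        if m = 1 then a4 * x (E 1) - a1 * x H2
        else if m = 2 then e * x (E 2) + g * x H1
        else if m = 3 then 2 * b 4 * x H2 - a1 * x (E 1)
        else if 4 \<le> m \<and> m \<le> n then
          (if m = n then b (n + 1) else of_nat (m - 1) * b (m + 1)) * x H2 + b m * x (E 1)
        else 0
    | _ \<Rightarrow> 0)"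

lemma lin_der_map: "4 \<le> n \<Longrightarrow> lin n (der_map n a1 a2 a3 a4)"
  by (auto simp: lin_def Lsp_def Bas_def der_map_def scl_def fun_eq_iff algebra_simps split: bas.split)

lemma lin_antider_map: "4 \<le> n \<Longrightarrow> lin n (antider_map n a1 a4 g e b)"
  by (auto simp: lin_def Lsp_def Bas_def antider_map_def scl_def fun_eq_iff algebra_simps split: bas.split)

lemma der_shape_der_map: "4 \<le> n \<Longrightarrow> der_shape n a1 a2 a3 a4 (der_map n a1 a2 a3 a4)"
  by (auto simp: der_shape_def fun_eq_iff der_map_def h1_apply h2_apply ee_apply scl_apply split: bas.split)

lemma antider_shape_antider_map: "4 \<le> n \<Longrightarrow> antider_shape n a1 a4 g e b (antider_map n a1 a4 g e b)"
  unfolding antider_shape_def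
  by (auto simp: fun_eq_iff antider_map_def sum_scl_ee_E sum_scl_ee_H h1_apply h2_apply ee_apply scl_apply
      split: bas.split)

lemma nat_cases_5: "(m::nat) = 0 \<or> m = 1 \<or> m = 2 \<or> m = 3 \<or> m = 4 \<or> (\<exists>j. m = j + 5)"
  by presburger

lemma der_map_derivation:
  assumes "4 \<le> n" "t \<or> a2 = 0"
  shows "der_map n a1 a2 a3 a4 (Lt_br t n x y)
    = Lt_br t n (der_map n a1 a2 a3 a4 x) y + Lt_br t n x (der_map n a1 a2 a3 a4 y)"
proof
  fix k
  show "der_map n a1 a2 a3 a4 (Lt_br t n x y) k
    = (Lt_br t n (der_map n a1 a2 a3 a4 x) y + Lt_br t n x (der_map n a1 a2 a3 a4 y)) k"
  proof (cases k)
    case (E m)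
    from nat_cases_5[of m] show ?thesis
      unfolding E by (elim disjE exE) (use assms in \<open>auto simp: Lt_br_def der_map_def algebra_simps\<close>)
  qed (simp_all add: Lt_br_def der_map_def)
qed

lemma antider_map_antiderivation:
  assumes "4 \<le> n" "t \<or> e = 0"
  shows "antider_map n a1 a4 g e b (Lt_br t n x y)
    = Lt_br t n (antider_map n a1 a4 g e b x) y - Lt_br t n (antider_map n a1 a4 g e b y) x"
proof
  fix k
  show "antider_map n a1 a4 g e b (Lt_br t n x y) k
    = (Lt_br t n (antider_map n a1 a4 g e b x) y - Lt_br t n (antider_map n a1 a4 g e b y) x) k"
  proof (cases k)
    case (E m)
    from nat_cases_5[of m] show ?thesis
      unfolding E by (elim disjE exE) (use assms in \<open>auto simp: Lt_br_def antider_map_def algebra_simps\<close>)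
  qed (simp_all add: Lt_br_def antider_map_def)
qed

lemma Lt_br_der_map_eq_antider_map:
  assumes "4 \<le> n" "t \<longrightarrow> g = - a2 \<and> e = a3"
  shows "Lt_br t n x (der_map n a1 a2 a3 a4 y) = Lt_br t n x (antider_map n a1 a4 g e b y)"
proof
  fix k
  show "Lt_br t n x (der_map n a1 a2 a3 a4 y) k = Lt_br t n x (antider_map n a1 a4 g e b y) k"
  proof (cases k)
    case (E m)
    from nat_cases_5[of m] show ?thesis
      unfolding E by (elim disjE exE) (use assms in \<open>auto simp: Lt_br_def der_map_def antider_map_def\<close>)
  qed (simp_all add: Lt_br_def)
qed

lemma der_shape_unique:
  assumes "lin n f" "lin n f'" "der_shape n a1 a2 a3 a4 f" "der_shape n a1 a2 a3 a4 f'" "x \<in> Lsp n"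
  shows "f x = f' x"
proof (rule lin_eq_on_generators[OF assms(1,2) _ _ _ assms(5)])
  fix j
  assume "1 \<le> j" "j \<le> n"
  then consider "j = 1" | "j = 2" | "3 \<le> j"
    by linarith
  then show "f (ee n j) = f' (ee n j)"
    using assms(3,4) \<open>j \<le> n\<close> by cases (simp_all add: der_shape_def)
qed (use assms(3,4) in \<open>simp_all add: der_shape_def\<close>)

lemma antider_shape_unique:
  assumes "lin n f" "lin n f'" "antider_shape n a1 a4 g e b f" "antider_shape n a1 a4 g e b f'" "x \<in> Lsp n"
  shows "f x = f' x"
proof (rule lin_eq_on_generators[OF assms(1,2) _ _ _ assms(5)])
  fix j
  assume "1 \<le> j" "j \<le> n"
  then consider "j = 1" | "j = 2" | "3 \<le> j"
    by linarith
  then show "f (ee n j) = f' (ee n j)"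
    using assms(3,4) \<open>j \<le> n\<close> by cases (simp_all add: antider_shape_def)
qed (use assms(3,4) in \<open>simp_all add: antider_shape_def\<close>)

lemma is_bider_iff_Lt_biderivation:
  assumes "4 \<le> n" "lin n d" "lin n D"
  shows "is_bider (if t then c1 n else c2 n) n d D \<longleftrightarrow> Lt_biderivation t n d D"
  using assms
  unfolding is_bider_def is_der_def is_antider_def br_eq_Lt_br[OF assms(1)]
    Lt_biderivation_def Lt_derivation_def Lt_biderivation_axioms_def
  by blast

lemma bider_iff_shape:
  assumes n: "4 \<le> n" and lin: "lin n d" "lin n D"
  shows "is_bider (if t then c1 n else c2 n) n d D \<longleftrightarrow>
    (\<exists>a1 a2 a3 a4 g e b. (if t then g = - a2 \<and> e = a3 else a2 = 0 \<and> e = 0) \<and>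
       der_shape n a1 a2 a3 a4 d \<and> antider_shape n a1 a4 g e b D)"
proof
  assume "is_bider (if t then c1 n else c2 n) n d D"
  then interpret Lt_biderivation t n d D
    using assms by (simp add: is_bider_iff_Lt_biderivation)
  have "if t then D h1 (E 2) = - (- d h1 (E 2)) \<and> D (ee n 2) (E 2) = d (ee n 2) (E 2)
    else - d h1 (E 2) = 0 \<and> D (ee n 2) (E 2) = 0"
    using compat_coords(4)[of h1] D_e2_E2 d_h1_E2_L2 by simp
  with der_shape_d antider_shape_D
  show "\<exists>a1 a2 a3 a4 g e b. (if t then g = - a2 \<and> e = a3 else a2 = 0 \<and> e = 0) \<and>
      der_shape n a1 a2 a3 a4 d \<and> antider_shape n a1 a4 g e b D"
    by blast
next
  assume "\<exists>a1 a2 a3 a4 g e b. (if t then g = - a2 \<and> e = a3 else a2 = 0 \<and> e = 0) \<and>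
      der_shape n a1 a2 a3 a4 d \<and> antider_shape n a1 a4 g e b D"
  then obtain a1 a2 a3 a4 g e b where params: "if t then g = - a2 \<and> e = a3 else a2 = 0 \<and> e = 0"
    and shapes: "der_shape n a1 a2 a3 a4 d" "antider_shape n a1 a4 g e b D"
    by blast
  have "x \<in> Lsp n \<Longrightarrow> d x = der_map n a1 a2 a3 a4 x" for x
    by (rule der_shape_unique[OF lin(1) lin_der_map[OF n] shapes(1) der_shape_der_map[OF n]])
  moreover have "x \<in> Lsp n \<Longrightarrow> D x = antider_map n a1 a4 g e b x" for x
    by (rule antider_shape_unique[OF lin(2) lin_antider_map[OF n] shapes(2)
          antider_shape_antider_map[OF n]])
  ultimately show "is_bider (if t then c1 n else c2 n) n d D"
    using params n lin unfolding is_bider_def is_der_def is_antider_def br_eq_Lt_br[OF n]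
    by (simp add: Lsp_Lt_br der_map_derivation antider_map_antiderivation
        Lt_br_der_map_eq_antider_map split: if_splits)
qed

lemma antider_shape_fun_upd:
  "antider_shape n a1 a4 g e (b(n + 2 := c)) D \<longleftrightarrow> antider_shape n a1 a4 g e b D"
proof -
  have "(\<Sum>i = 3..n - 1. scl (of_nat (i - 1) * (b(n + 2 := c)) (i + 1)) (ee n i))
      = (\<Sum>i = 3..n - 1. scl (of_nat (i - 1) * b (i + 1)) (ee n i))"
    "(\<Sum>i = 4..n. scl ((b(n + 2 := c)) i) (ee n i)) = (\<Sum>i = 4..n. scl (b i) (ee n i))"
    by (intro sum.cong refl; auto)+
  then show ?thesis
    by (simp add: antider_shape_def)
qed

lemma scl_zero [simp]: "scl 0 v = 0"
  by (simp add: scl_def fun_eq_iff)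

lemma bider_L1_iff:
  assumes "4 \<le> n" "lin n d" "lin n D"
  shows "is_bider (c1 n) n d D \<longleftrightarrow>
       (\<exists>(a1::complex) a2 a3 a4 (b::nat \<Rightarrow> complex).
          d h1 = scl (- a2) (ee n 2) \<and>
          d h2 = scl (- a1) (ee n 1) \<and>
          d (ee n 1) = scl a4 (ee n 1) + scl a1 (ee n 3) \<and>
          d (ee n 2) = scl a3 (ee n 2) \<and>
          (\<forall>i. 3 \<le> i \<and> i \<le> n \<longrightarrow>
             d (ee n i) = scl (of_nat (i - 1) * a4) (ee n i) + scl a1 (ee n (i + 1))) \<and>
          D h1 = scl (- a2) (ee n 2) \<and>
          D h2 = scl (- a1) (ee n 1) + (\<Sum>i = 3..n - 1. scl (of_nat (i - 1) * b (i + 1)) (ee n i))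
                 + scl (b (n + 1)) (ee n n) \<and>
          D (ee n 1) = scl a4 (ee n 1) + scl (- a1) (ee n 3) + (\<Sum>i = 4..n. scl (b i) (ee n i)) \<and>
          D (ee n 2) = scl a3 (ee n 2) \<and>
          (\<forall>i. 3 \<le> i \<and> i \<le> n \<longrightarrow> D (ee n i) = 0))"
  using bider_iff_shape[OF assms, of True] by (simp add: der_shape_def antider_shape_def)

lemma bider_L2_iff:
  assumes "4 \<le> n" "lin n d" "lin n D"
  shows "is_bider (c2 n) n d D \<longleftrightarrow>
       (\<exists>(a1::complex) a2 a3 (b::nat \<Rightarrow> complex).
          d h1 = 0 \<and>
          d h2 = scl (- a1) (ee n 1) \<and>
          d (ee n 1) = scl a3 (ee n 1) + scl a1 (ee n 3) \<and>
          d (ee n 2) = scl a2 (ee n 2) \<and>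
          (\<forall>i. 3 \<le> i \<and> i \<le> n \<longrightarrow>
             d (ee n i) = scl (of_nat (i - 1) * a3) (ee n i) + scl a1 (ee n (i + 1))) \<and>
          D h1 = scl (b (n + 2)) (ee n 2) \<and>
          D h2 = scl (- a1) (ee n 1) + (\<Sum>i = 3..n - 1. scl (of_nat (i - 1) * b (i + 1)) (ee n i))
                 + scl (b (n + 1)) (ee n n) \<and>
          D (ee n 1) = scl a3 (ee n 1) + scl (- a1) (ee n 3) + (\<Sum>i = 4..n. scl (b i) (ee n i)) \<and>
          (\<forall>i. 2 \<le> i \<and> i \<le> n \<longrightarrow> D (ee n i) = 0))" (is "_ \<longleftrightarrow> ?R")
proof -
  have "is_bider (c2 n) n d D \<longleftrightarrow>
      (\<exists>a1 a3 a4 g b. der_shape n a1 0 a3 a4 d \<and> antider_shape n a1 a4 g 0 b D)"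
    using bider_iff_shape[OF assms, of False] by simp
  \<comment> \<open>The statement stores the free coefficient of \<open>D h1\<close> in the otherwise unused \<open>b (n + 2)\<close>.\<close>
  also have "\<dots> \<longleftrightarrow> (\<exists>a1 a2 a3 b. der_shape n a1 0 a2 a3 d \<and> antider_shape n a1 a3 (b (n + 2)) 0 b D)"
    by (metis antider_shape_fun_upd fun_upd_same)
  also have "\<dots> \<longleftrightarrow> ?R"
  proof -
    have "(\<forall>i. 2 \<le> i \<and> i \<le> n \<longrightarrow> P i) \<longleftrightarrow> P 2 \<and> (\<forall>i. 3 \<le> i \<and> i \<le> n \<longrightarrow> P i)" for P
    proof -
      have "2 \<le> i \<longleftrightarrow> i = 2 \<or> 3 \<le> i" for i :: nat
        by auto
      then show ?thesis
        using assms(1) by auto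
    qed
    then show ?thesis
      by (simp add: der_shape_def antider_shape_def)
  qed
  finally show ?thesis .
qed

theorem mainTheorem13:
  fixes n :: nat
  assumes "n \<ge> 4"
  shows "(\<forall>d D. lin n d \<longrightarrow> lin n D \<longrightarrow>
     (is_bider (c1 n) n d D \<longleftrightarrow>
       (\<exists>(a1::complex) a2 a3 a4 (b::nat \<Rightarrow> complex).
          d h1 = scl (- a2) (ee n 2) \<and>
          d h2 = scl (- a1) (ee n 1) \<and>
          d (ee n 1) = scl a4 (ee n 1) + scl a1 (ee n 3) \<and>
          d (ee n 2) = scl a3 (ee n 2) \<and>
          (\<forall>i. 3 \<le> i \<and> i \<le> n \<longrightarrow>
             d (ee n i) = scl (of_nat (i - 1) * a4) (ee n i) + scl a1 (ee n (i + 1))) \<and>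
          D h1 = scl (- a2) (ee n 2) \<and>
          D h2 = scl (- a1) (ee n 1) + (\<Sum>i = 3..n - 1. scl (of_nat (i - 1) * b (i + 1)) (ee n i))
                 + scl (b (n + 1)) (ee n n) \<and>
          D (ee n 1) = scl a4 (ee n 1) + scl (- a1) (ee n 3) + (\<Sum>i = 4..n. scl (b i) (ee n i)) \<and>
          D (ee n 2) = scl a3 (ee n 2) \<and>
          (\<forall>i. 3 \<le> i \<and> i \<le> n \<longrightarrow> D (ee n i) = 0))))
   \<and> (\<forall>d D. lin n d \<longrightarrow> lin n D \<longrightarrow>
     (is_bider (c2 n) n d D \<longleftrightarrow>
       (\<exists>(a1::complex) a2 a3 (b::nat \<Rightarrow> complex).
          d h1 = 0 \<and>
          d h2 = scl (- a1) (ee n 1) \<and>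
          d (ee n 1) = scl a3 (ee n 1) + scl a1 (ee n 3) \<and>
          d (ee n 2) = scl a2 (ee n 2) \<and>
          (\<forall>i. 3 \<le> i \<and> i \<le> n \<longrightarrow>
             d (ee n i) = scl (of_nat (i - 1) * a3) (ee n i) + scl a1 (ee n (i + 1))) \<and>
          D h1 = scl (b (n + 2)) (ee n 2) \<and>
          D h2 = scl (- a1) (ee n 1) + (\<Sum>i = 3..n - 1. scl (of_nat (i - 1) * b (i + 1)) (ee n i))
                 + scl (b (n + 1)) (ee n n) \<and>
          D (ee n 1) = scl a3 (ee n 1) + scl (- a1) (ee n 3) + (\<Sum>i = 4..n. scl (b i) (ee n i)) \<and>
          (\<forall>i. 2 \<le> i \<and> i \<le> n \<longrightarrow> D (ee n i) = 0))))"
  using bider_L1_iff[OF assms] bider_L2_iff[OF assms] by blast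

end
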